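(* Let $(X,\mathcal{A},\mu)$ be a $q$-measure space, let $A_1,\dots,A_n\in\mathcal{A}$ be mutually disjoint, let $0<\alpha_1<\alpha_2<\dots<\alpha_n$, and let $f=\sum_{i=1}^n\alpha_i\chi_{A_i}$. Then \[ \int f\,d\mu=\sum_{k=1}^{n-1}\alpha_k\Big[\sum_{j=k+1}^n\mu(A_k\cup A_j)-(n-k-1)\mu(A_k)-\sum_{j=k+1}^n\mu(A_j)\Big]+\alpha_n\mu(A_n). \] Equivalently, with $\alpha_0=0$, $\int f\,d\mu=\sum_{k=1}^n(\alpha_k-\alpha_{k-1})\,\mu(A_k\cup\dots\cup A_n)$.
   Context: A $q$-measure space is a triple $(X,\mathcal{A},\mu)$ where $\mathcal{A}$ is a $\sigma$-algebra of subsets of $X$ and $\mu\colon\mathcal{A}\to[0,\infty)$ satisfies: (i) grade-2 additivity: $\mu(A\cup B\cup C)=\mu(A\cup B)+\mu(A\cup C)+\mu(B\cup C)-\mu(A)-\mu(B)-\mu(C)$ for mutually disjoint $A,B,C\in\mathcal{A}$; (ii) if $A_i\in\mathcal{A}$ is increasing then $\mu(\bigcup A_i)=\lim\mu(A_i)$; (iii) if $A_i\in\mathcal{A}$ is decreasing then $\mu(\bigcap A_i)=\lim\mu(A_i)$. $\chi_A$ denotes the characteristic function of $A$. For measurable $f\colon X\to\mathbb{R}$, $f$ is called $\mu$-integrable if $\lambda\mapsto\mu(f^{-1}(\lambda,\infty))$ and $\lambda\mapsto\mu(f^{-1}(-\infty,-\lambda))$ have finite Lebesgue integral over $[0,\infty)$,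 and then the $q$-integral is $\int f\,d\mu=\int_0^\infty\mu(f^{-1}(\lambda,\infty))\,d\lambda-\int_0^\infty\mu(f^{-1}(-\infty,-\lambda))\,d\lambda$. *)

theory Defs
  imports "HOL-Analysis.Analysis"
begin

definition q_measure_space :: "'a set \<Rightarrow> 'a set set \<Rightarrow> ('a set \<Rightarrow> real) \<Rightarrow> bool" where
  "q_measure_space X \<A> \<mu> \<longleftrightarrow>
     sigma_algebra X \<A> \<and>
     (\<forall>A\<in>\<A>. 0 \<le> \<mu> A) \<and>
     (\<forall>A\<in>\<A>. \<forall>B\<in>\<A>. \<forall>C\<in>\<A>. A \<inter> B = {} \<and> A \<inter> C = {} \<and> B \<inter> C = {} \<longrightarrow>
        \<mu> (A \<union> B \<union> C) = \<mu> (A \<union> B) + \<mu> (A \<union> C) + \<mu> (B \<union> C) - \<mu> A - \<mu> B - \<mu> C) \<and>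
     (\<forall>S::nat \<Rightarrow> 'a set. range S \<subseteq> \<A> \<and> incseq S \<longrightarrow> (\<lambda>i. \<mu> (S i)) \<longlonglongrightarrow> \<mu> (\<Union>i. S i)) \<and>
     (\<forall>S::nat \<Rightarrow> 'a set. range S \<subseteq> \<A> \<and> decseq S \<longrightarrow> (\<lambda>i. \<mu> (S i)) \<longlonglongrightarrow> \<mu> (\<Inter>i. S i))"

definition q_measurable :: "'a set \<Rightarrow> 'a set set \<Rightarrow> ('a \<Rightarrow> real) \<Rightarrow> bool" where
  "q_measurable X \<A> f \<longleftrightarrow> (\<forall>B\<in>sets borel. {x\<in>X. f x \<in> B} \<in> \<A>)"

definition q_pos_part :: "'a set \<Rightarrow> ('a set \<Rightarrow> real) \<Rightarrow> ('a \<Rightarrow> real) \<Rightarrow> real \<Rightarrow> real" where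
  "q_pos_part X \<mu> f = (\<lambda>t. \<mu> {x\<in>X. f x > t})"

definition q_neg_part :: "'a set \<Rightarrow> ('a set \<Rightarrow> real) \<Rightarrow> ('a \<Rightarrow> real) \<Rightarrow> real \<Rightarrow> real" where
  "q_neg_part X \<mu> f = (\<lambda>t. \<mu> {x\<in>X. f x < - t})"

definition q_integrable :: "'a set \<Rightarrow> 'a set set \<Rightarrow> ('a set \<Rightarrow> real) \<Rightarrow> ('a \<Rightarrow> real) \<Rightarrow> bool" where
  "q_integrable X \<A> \<mu> f \<longleftrightarrow> q_measurable X \<A> f \<and>
     set_integrable lborel {0..} (q_pos_part X \<mu> f) \<and>
     set_integrable lborel {0..} (q_neg_part X \<mu> f)"

definition q_integral :: "'a set \<Rightarrow> ('a set \<Rightarrow> real) \<Rightarrow> ('a \<Rightarrow> real) \<Rightarrow> real" where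
  "q_integral X \<mu> f =
     (LINT t:{0..}|lborel. q_pos_part X \<mu> f t) - (LINT t:{0..}|lborel. q_neg_part X \<mu> f t)"

end

theory Submission
  imports Defs
begin

(* Writing T k = A k \<union> ... \<union> A n for the tail unions, the superlevel set {f > t} of a
   height t \<ge> 0 is the tail T k of the first block whose height exceeds t.  Telescoping, the
   distribution function t \<mapsto> \<mu> {f > t} is the step function \<Sum>k. (\<mu>(T k) - \<mu>(T (k+1))) \<chi>[0,\<alpha> k),
   whose Lebesgue integral is \<Sum>k. \<alpha> k (\<mu>(T k) - \<mu>(T (k+1))); the negative part vanishes.
   Finally grade-2 additivity expands \<mu>(A k \<union> T (k+1)) - \<mu>(T (k+1)) into the pairwise terms of
   the paper's formula.
   The file establishes, in order: basic facts on q-measures (empty set, expansion of a finite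
   disjoint union), facts on step functions (values, measurability, superlevel sets,
   distribution function), the integral of a nonnegative function through an integrable
   representative of its distribution function, and the rewriting of the layer sum. *)

lemma q_measure_space_sigma_algebra:
  assumes "q_measure_space X \<A> \<mu>"
  shows "sigma_algebra X \<A>"
  using assms unfolding q_measure_space_def by blast

lemma q_measure_grade2:
  assumes "q_measure_space X \<A> \<mu>" and "A \<in> \<A>" "B \<in> \<A>" "C \<in> \<A>"
    and "A \<inter> B = {}" "A \<inter> C = {}" "B \<inter> C = {}"
  shows "\<mu> (A \<union> B \<union> C) = \<mu> (A \<union> B) + \<mu> (A \<union> C) + \<mu> (B \<union> C) - \<mu> A - \<mu> B - \<mu> C"
  using assms unfolding q_measure_space_def by blast

text \<open>Grade-2 additivity applied to three copies of the empty set gives \<open>\<mu> {} = 0\<close>.\<close>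

lemma q_measure_empty:
  assumes "q_measure_space X \<A> \<mu>"
  shows "\<mu> {} = 0"
proof -
  interpret sigma_algebra X \<A> using q_measure_space_sigma_algebra[OF assms] .
  have "{} \<in> \<A>" by simp
  from q_measure_grade2[OF assms this this this] show ?thesis by simp
qed

lemma q_measure_adjoin_union:
  assumes q: "q_measure_space X \<A> \<mu>" and "finite J" and B: "B \<in> \<A>"
    and "\<forall>j\<in>J. C j \<in> \<A>" and "\<forall>j\<in>J. B \<inter> C j = {}"
    and "\<forall>i\<in>J. \<forall>j\<in>J. i \<noteq> j \<longrightarrow> C i \<inter> C j = {}"
  shows "\<mu> (B \<union> (\<Union>j\<in>J. C j)) - \<mu> (\<Union>j\<in>J. C j)
    = (\<Sum>j\<in>J. \<mu> (B \<union> C j)) - (real (card J) - 1) * \<mu> B - (\<Sum>j\<in>J. \<mu> (C j))"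
  using assms(2,4-6)
proof (induction J rule: finite_induct)
  case empty
  then show ?case using q_measure_empty[OF q] by simp
next
  case (insert c J)
  interpret sigma_algebra X \<A> using q_measure_space_sigma_algebra[OF q] .
  let ?U = "\<Union>j\<in>J. C j"
  have "?U \<in> \<A>" "C c \<in> \<A>" using insert by auto
  moreover have "B \<inter> C c = {}" "B \<inter> ?U = {}" "C c \<inter> ?U = {}" using insert by auto
  ultimately have grade2: "\<mu> (B \<union> C c \<union> ?U)
      = \<mu> (B \<union> C c) + \<mu> (B \<union> ?U) + \<mu> (C c \<union> ?U) - \<mu> B - \<mu> (C c) - \<mu> ?U"
    using q_measure_grade2[OF q B] by blast
  have IH: "\<mu> (B \<union> ?U) - \<mu> ?U
      = (\<Sum>j\<in>J. \<mu> (B \<union> C j)) - (real (card J) - 1) * \<mu> B - (\<Sum>j\<in>J. \<mu> (C j))"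
    using insert by auto
  have "B \<union> (\<Union>j\<in>insert c J. C j) = B \<union> C c \<union> ?U" "(\<Union>j\<in>insert c J. C j) = C c \<union> ?U"
    by auto
  then show ?case using grade2 IH insert.hyps by (simp add: algebra_simps Un_assoc)
qed

section \<open>Tail unions and final segments of indices\<close>

definition tail_union :: "(nat \<Rightarrow> 'a set) \<Rightarrow> nat \<Rightarrow> nat \<Rightarrow> 'a set" where
  "tail_union A n k = (\<Union>j\<in>{k..n}. A j)"

lemma tail_union_telescope:
  fixes \<mu> :: "'a set \<Rightarrow> real"
  assumes "\<mu> {} = 0" and "k \<le> Suc n"
  shows "\<mu> (tail_union A n k)
    = (\<Sum>j=k..n. \<mu> (tail_union A n j) - \<mu> (tail_union A n (Suc j)))"
proof -
  have "(\<Sum>j=k..n. \<mu> (tail_union A n j) - \<mu> (tail_union A n (Suc j)))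
      = (\<Sum>j=k..n. (- \<mu> (tail_union A n (Suc j))) - (- \<mu> (tail_union A n j)))"
    by simp
  also have "\<dots> = \<mu> (tail_union A n k) - \<mu> (tail_union A n (Suc n))"
    using sum_Suc_diff[OF assms(2), of "\<lambda>j. - \<mu> (tail_union A n j)"] by simp
  finally show ?thesis using assms(1) by (simp add: tail_union_def)
qed

lemma upward_closed_is_final_segment:
  fixes S :: "nat set"
  assumes "S \<subseteq> {1..n}" and up: "\<forall>i\<in>S. \<forall>j. i \<le> j \<and> j \<le> n \<longrightarrow> j \<in> S"
  obtains k where "1 \<le> k" "k \<le> Suc n" "S = {k..n}"
proof (cases "S = {}")
  case True
  then show ?thesis using that[of "Suc n"] by simp
next
  case False
  let ?k = "Min S"
  have "finite S" using assms(1) finite_subset by blast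
  then have k_in: "?k \<in> S" and k_min: "\<And>i. i \<in> S \<Longrightarrow> ?k \<le> i"
    using False by auto
  have "S = {?k..n}"
  proof
    show "S \<subseteq> {?k..n}" using k_min assms(1) by auto
    show "{?k..n} \<subseteq> S" using up k_in by auto
  qed
  moreover have "1 \<le> ?k" "?k \<le> Suc n" using k_in assms(1) by auto
  ultimately show ?thesis using that by blast
qed

lemma consecutive_increase_mono:
  fixes \<alpha> :: "nat \<Rightarrow> 'b::order"
  assumes "\<forall>k\<in>{1..<n}. \<alpha> k < \<alpha> (Suc k)" and "1 \<le> i" "i \<le> j" "j \<le> n"
  shows "\<alpha> i \<le> \<alpha> j"
  using assms(3,4)
proof (induction j rule: dec_induct)
  case base
  then show ?case by simp
next
  case (step m)
  then have "\<alpha> m < \<alpha> (Suc m)" using assms(1,2) by auto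
  with step show ?case by auto
qed

section \<open>Step functions\<close>

definition step_fun :: "nat \<Rightarrow> (nat \<Rightarrow> real) \<Rightarrow> (nat \<Rightarrow> 'a set) \<Rightarrow> 'a \<Rightarrow> real" where
  "step_fun n \<alpha> A x = (\<Sum>i=1..n. \<alpha> i * indicator (A i) x)"

lemma step_fun_on_block:
  assumes disj: "\<forall>i\<in>{1..n}. \<forall>j\<in>{1..n}. i \<noteq> j \<longrightarrow> A i \<inter> A j = {}"
    and i: "i \<in> {1..n}" and x: "x \<in> A i"
  shows "step_fun n \<alpha> A x = \<alpha> i"
proof -
  have off: "x \<notin> A j" if "j \<in> {1..n} - {i}" for j
    using disj i x that by blast
  have "step_fun n \<alpha> A x = \<alpha> i * indicator (A i) x + (\<Sum>j\<in>{1..n}-{i}. \<alpha> j * indicator (A j) x)"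
    unfolding step_fun_def using i by (subst sum.remove[of "{1..n}" i]) auto
  also have "(\<Sum>j\<in>{1..n}-{i}. \<alpha> j * indicator (A j) x) = 0"
    using off by (intro sum.neutral) simp
  finally show ?thesis using x by simp
qed

lemma step_fun_off_blocks:
  assumes "\<forall>i\<in>{1..n}. x \<notin> A i"
  shows "step_fun n \<alpha> A x = 0"
  unfolding step_fun_def using assms by (intro sum.neutral) auto

text \<open>Preimages of Borel sets are finite unions of blocks, possibly together with the
  complement of all blocks; hence a step function over measurable blocks is measurable.\<close>

lemma step_fun_measurable:
  assumes "sigma_algebra X \<A>" and Ain: "\<forall>i\<in>{1..n}. A i \<in> \<A>"
    and disj: "\<forall>i\<in>{1..n}. \<forall>j\<in>{1..n}. i \<noteq> j \<longrightarrow> A i \<inter> A j = {}"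
  shows "q_measurable X \<A> (step_fun n \<alpha> A)"
  unfolding q_measurable_def
proof
  interpret sigma_algebra X \<A> by fact
  fix B :: "real set"
  have AX: "\<forall>i\<in>{1..n}. A i \<subseteq> X" using Ain sets_into_space by blast
  have preimage: "{x\<in>X. step_fun n \<alpha> A x \<in> B}
      = (if 0 \<in> B then X - (\<Union>j\<in>{1..n}. A j) else {}) \<union> (\<Union>j\<in>{j\<in>{1..n}. \<alpha> j \<in> B}. A j)"
    (is "?L = ?R")
  proof (intro set_eqI iffI)
    fix x assume x: "x \<in> ?L"
    show "x \<in> ?R"
    proof (cases "\<exists>i\<in>{1..n}. x \<in> A i")
      case True
      then obtain i where i: "i \<in> {1..n}" "x \<in> A i" by blast
      then have "\<alpha> i \<in> B" using x step_fun_on_block[OF disj i] by simp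
      then show ?thesis using i by blast
    next
      case False
      then have "0 \<in> B" using x step_fun_off_blocks[of n x A \<alpha>] by simp
      then show ?thesis using x False by simp
    qed
  next
    fix x assume x: "x \<in> ?R"
    show "x \<in> ?L"
    proof (cases "\<exists>j\<in>{1..n}. \<alpha> j \<in> B \<and> x \<in> A j")
      case True
      then obtain j where j: "j \<in> {1..n}" "\<alpha> j \<in> B" "x \<in> A j" by blast
      then show ?thesis using AX step_fun_on_block[OF disj j(1,3)] by auto
    next
      case False
      then have "0 \<in> B" "x \<in> X" "\<forall>i\<in>{1..n}. x \<notin> A i" using x by (auto split: if_splits)
      then show ?thesis using step_fun_off_blocks[of n x A \<alpha>] by simp
    qed
  qed
  have "(\<Union>j\<in>{1..n}. A j) \<in> \<A>" "(\<Union>j\<in>{j\<in>{1..n}. \<alpha> j \<in> B}. A j) \<in> \<A>"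
    using Ain by auto
  then show "?L \<in> \<A>" unfolding preimage by auto
qed

lemma step_fun_superlevel:
  assumes disj: "\<forall>i\<in>{1..n}. \<forall>j\<in>{1..n}. i \<noteq> j \<longrightarrow> A i \<inter> A j = {}"
    and AX: "\<forall>i\<in>{1..n}. A i \<subseteq> X" and "0 \<le> t"
  shows "{x\<in>X. t < step_fun n \<alpha> A x} = (\<Union>j\<in>{j\<in>{1..n}. t < \<alpha> j}. A j)"
proof (intro set_eqI iffI)
  fix x assume x: "x \<in> {x\<in>X. t < step_fun n \<alpha> A x}"
  then have "\<not> (\<forall>i\<in>{1..n}. x \<notin> A i)"
    using step_fun_off_blocks[of n x A \<alpha>] \<open>0 \<le> t\<close> by auto
  then obtain i where i: "i \<in> {1..n}" "x \<in> A i" by blast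
  then have "t < \<alpha> i" using x step_fun_on_block[OF disj i] by simp
  then show "x \<in> (\<Union>j\<in>{j\<in>{1..n}. t < \<alpha> j}. A j)" using i by blast
next
  fix x assume "x \<in> (\<Union>j\<in>{j\<in>{1..n}. t < \<alpha> j}. A j)"
  then obtain j where j: "j \<in> {1..n}" "t < \<alpha> j" "x \<in> A j" by blast
  then show "x \<in> {x\<in>X. t < step_fun n \<alpha> A x}"
    using AX step_fun_on_block[OF disj j(1,3)] by auto
qed

text \<open>Layer-cake representation of the distribution function: for increasing heights, the
  superlevel set at \<open>t \<ge> 0\<close> is a tail union, and telescoping rewrites its \<open>\<mu>\<close>-value as the
  value at \<open>t\<close> of a step function of \<open>t\<close>.\<close>

lemma step_fun_distribution:
  fixes \<mu> :: "'a set \<Rightarrow> real"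
  assumes "\<mu> {} = 0"
    and disj: "\<forall>i\<in>{1..n}. \<forall>j\<in>{1..n}. i \<noteq> j \<longrightarrow> A i \<inter> A j = {}"
    and AX: "\<forall>i\<in>{1..n}. A i \<subseteq> X"
    and mono: "\<And>i j. 1 \<le> i \<Longrightarrow> i \<le> j \<Longrightarrow> j \<le> n \<Longrightarrow> \<alpha> i \<le> \<alpha> j"
    and "0 \<le> t"
  shows "q_pos_part X \<mu> (step_fun n \<alpha> A) t
    = (\<Sum>k=1..n. (\<mu> (tail_union A n k) - \<mu> (tail_union A n (Suc k))) * indicator {0..<\<alpha> k} t)"
proof -
  let ?S = "{j\<in>{1..n}. t < \<alpha> j}"
  obtain k where k: "1 \<le> k" "k \<le> Suc n" "?S = {k..n}"
  proof (rule upward_closed_is_final_segment[of ?S n])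
    show "\<forall>i\<in>?S. \<forall>j. i \<le> j \<and> j \<le> n \<longrightarrow> j \<in> ?S"
      using mono by (fastforce intro: less_le_trans)
  qed auto
  have "q_pos_part X \<mu> (step_fun n \<alpha> A) t = \<mu> (tail_union A n k)"
    unfolding q_pos_part_def step_fun_superlevel[OF disj AX \<open>0 \<le> t\<close>] k(3) tail_union_def ..
  also have "\<dots> = (\<Sum>j=k..n. \<mu> (tail_union A n j) - \<mu> (tail_union A n (Suc j)))"
    using tail_union_telescope[of \<mu> k n A] assms(1) k(2) by simp
  also have "\<dots> = (\<Sum>j\<in>{1..n} \<inter> ?S. \<mu> (tail_union A n j) - \<mu> (tail_union A n (Suc j)))"
    using k by (intro sum.cong) auto
  also have "\<dots> = (\<Sum>j=1..n. (\<mu> (tail_union A n j) - \<mu> (tail_union A n (Suc j)))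
                              * indicator {0..<\<alpha> j} t)"
    unfolding sum.inter_restrict[OF finite_atLeastAtMost]
    using \<open>0 \<le> t\<close> by (intro sum.cong) (auto simp: indicator_def)
  finally show ?thesis .
qed

section \<open>Integrals\<close>

lemma has_bochner_integral_step:
  fixes a c :: "'i \<Rightarrow> real"
  assumes "\<forall>k\<in>I. 0 \<le> a k"
  shows "has_bochner_integral lborel (\<lambda>t. \<Sum>k\<in>I. c k * indicator {0..<a k} t) (\<Sum>k\<in>I. c k * a k)"
proof (rule has_bochner_integral_sum)
  fix k assume "k \<in> I"
  then have "0 \<le> a k" using assms by blast
  then have "has_bochner_integral lborel (indicator {0..<a k}) (measure lborel {0..<a k})"
    by (intro has_bochner_integral_real_indicator) simp_all
  then have "has_bochner_integral lborel (indicator {0..<a k}) (a k)"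
    by (simp only: measure_lborel_Ico[OF \<open>0 \<le> a k\<close>] diff_zero)
  then show "has_bochner_integral lborel (\<lambda>t. c k * indicator {0..<a k} t) (c k * a k)"
    by (rule has_bochner_integral_mult_right)
qed

text \<open>For a nonnegative measurable function the negative part of the q-integral vanishes, so
  the function is q-integrable with integral \<open>I\<close> as soon as its distribution function on
  \<open>[0,\<infinity>)\<close> agrees with a function \<open>h\<close>, vanishing on negative reals, of Lebesgue integral \<open>I\<close>.\<close>

lemma q_integral_via_distribution:
  assumes "\<mu> {} = 0" and meas: "q_measurable X \<A> f" and nonneg: "\<forall>x\<in>X. 0 \<le> f x"
    and dist: "\<And>t. 0 \<le> t \<Longrightarrow> q_pos_part X \<mu> f t = h t"
    and h_neg: "\<And>t. t < 0 \<Longrightarrow> h t = 0"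
    and h_int: "has_bochner_integral lborel h I"
  shows "q_integrable X \<A> \<mu> f \<and> q_integral X \<mu> f = I"
proof -
  have pos: "(\<lambda>t. indicator {0..} t *\<^sub>R q_pos_part X \<mu> f t) = h"
    using dist h_neg by (force simp: indicator_def)
  have "q_neg_part X \<mu> f t = 0" if "0 \<le> t" for t
  proof -
    have no_level: "{x\<in>X. f x < - t} = {}" using nonneg that by force
    show ?thesis by (simp only: q_neg_part_def no_level assms(1))
  qed
  then have neg: "(\<lambda>t. indicator {0..} t *\<^sub>R q_neg_part X \<mu> f t) = (\<lambda>_. 0)"
    by (force simp: indicator_def)
  show ?thesis
    unfolding q_integrable_def q_integral_def set_integrable_def set_lebesgue_integral_def pos neg
    using meas h_int by (simp add: has_bochner_integral_iff)
qed

section \<open>The layer sum in the paper's form\<close>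

text \<open>Each increment \<open>\<mu>(T k) - \<mu>(T (k+1))\<close> of the tail unions expands, by grade-2 additivity,
  into pairwise terms; the last increment is \<open>\<mu> (A n)\<close>.\<close>

lemma q_measure_layer_sum:
  assumes q: "q_measure_space X \<A> \<mu>" and "n \<ge> 1"
    and Ain: "\<forall>i\<in>{1..n}. A i \<in> \<A>"
    and disj: "\<forall>i\<in>{1..n}. \<forall>j\<in>{1..n}. i \<noteq> j \<longrightarrow> A i \<inter> A j = {}"
  shows "(\<Sum>k=1..n. (\<mu> (tail_union A n k) - \<mu> (tail_union A n (Suc k))) * \<alpha> k)
    = (\<Sum>k=1..n-1. \<alpha> k * ((\<Sum>j=k+1..n. \<mu> (A k \<union> A j)) - real (n - k - 1) * \<mu> (A k)
                            - (\<Sum>j=k+1..n. \<mu> (A j))))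
      + \<alpha> n * \<mu> (A n)"
proof -
  have increment: "\<mu> (tail_union A n k) - \<mu> (tail_union A n (Suc k))
      = (\<Sum>j=k+1..n. \<mu> (A k \<union> A j)) - real (n - k - 1) * \<mu> (A k) - (\<Sum>j=k+1..n. \<mu> (A j))"
    if "1 \<le> k" "k < n" for k
  proof -
    have "{k..n} = insert k {k+1..n}" using that by auto
    then have "tail_union A n k = A k \<union> (\<Union>j\<in>{k+1..n}. A j)"
      "tail_union A n (Suc k) = (\<Union>j\<in>{k+1..n}. A j)"
      unfolding tail_union_def by auto
    moreover have "real (card {k+1..n}) - 1 = real (n - k - 1)" using that by simp
    moreover have "\<mu> (A k \<union> (\<Union>j\<in>{k+1..n}. A j)) - \<mu> (\<Union>j\<in>{k+1..n}. A j)
        = (\<Sum>j\<in>{k+1..n}. \<mu> (A k \<union> A j)) - (real (card {k+1..n}) - 1) * \<mu> (A k)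
          - (\<Sum>j\<in>{k+1..n}. \<mu> (A j))"
      using that Ain disj by (intro q_measure_adjoin_union[OF q]) auto
    ultimately show ?thesis by simp
  qed
  have last: "\<mu> (tail_union A n n) - \<mu> (tail_union A n (Suc n)) = \<mu> (A n)"
    using q_measure_empty[OF q] by (simp add: tail_union_def)
  obtain m where m: "n = Suc m" using \<open>n \<ge> 1\<close> by (cases n) auto
  show ?thesis
    unfolding m sum.cl_ivl_Suc using increment last m by (auto intro!: sum.cong)
qed

theorem lemma4p2:
  fixes X :: "'a set" and \<A> :: "'a set set" and \<mu> :: "'a set \<Rightarrow> real"
    and n :: nat and A :: "nat \<Rightarrow> 'a set" and \<alpha> :: "nat \<Rightarrow> real" and f :: "'a \<Rightarrow> real"
  assumes "q_measure_space X \<A> \<mu>"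
    and "n \<ge> 1"
    and "\<forall>i\<in>{1..n}. A i \<in> \<A>"
    and "\<forall>i\<in>{1..n}. \<forall>j\<in>{1..n}. i \<noteq> j \<longrightarrow> A i \<inter> A j = {}"
    and "0 < \<alpha> 1"
    and "\<forall>k\<in>{1..<n}. \<alpha> k < \<alpha> (Suc k)"
    and "f = (\<lambda>x. \<Sum>i=1..n. \<alpha> i * indicator (A i) x)"
  shows "q_integrable X \<A> \<mu> f \<and>
    q_integral X \<mu> f =
      (\<Sum>k=1..n-1. \<alpha> k * ((\<Sum>j=k+1..n. \<mu> (A k \<union> A j)) - real (n - k - 1) * \<mu> (A k)
                              - (\<Sum>j=k+1..n. \<mu> (A j))))
      + \<alpha> n * \<mu> (A n)"
proof -
  note q = assms(1) and Ain = assms(3) and disj = assms(4)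
  have empty: "\<mu> {} = 0" using q_measure_empty[OF q] .
  have sa: "sigma_algebra X \<A>" using q_measure_space_sigma_algebra[OF q] .
  interpret sigma_algebra X \<A> by (rule sa)
  have AX: "\<forall>i\<in>{1..n}. A i \<subseteq> X" using Ain sets_into_space by blast
  have f: "f = step_fun n \<alpha> A" using assms(7) by (simp add: step_fun_def fun_eq_iff)
  have mono: "\<And>i j. 1 \<le> i \<Longrightarrow> i \<le> j \<Longrightarrow> j \<le> n \<Longrightarrow> \<alpha> i \<le> \<alpha> j"
    using consecutive_increase_mono[OF assms(6)] .
  have heights_nonneg: "\<forall>k\<in>{1..n}. 0 \<le> \<alpha> k"
    using mono[of 1] assms(5) by fastforce
  have nonneg: "\<forall>x\<in>X. 0 \<le> f x"
    using heights_nonneg step_fun_on_block[OF disj] step_fun_off_blocks unfolding f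
    by (metis order_refl)
  define c where "c k = \<mu> (tail_union A n k) - \<mu> (tail_union A n (Suc k))" for k
  have "q_integrable X \<A> \<mu> f \<and> q_integral X \<mu> f = (\<Sum>k=1..n. c k * \<alpha> k)"
  proof (rule q_integral_via_distribution[where h = "\<lambda>t. \<Sum>k=1..n. c k * indicator {0..<\<alpha> k} t"])
    show "q_measurable X \<A> f" unfolding f using step_fun_measurable[OF sa Ain disj] .
    show "q_pos_part X \<mu> f t = (\<Sum>k=1..n. c k * indicator {0..<\<alpha> k} t)" if "0 \<le> t" for t
      unfolding f c_def using step_fun_distribution[where \<mu> = \<mu>, OF empty disj AX mono that] .
    show "has_bochner_integral lborel (\<lambda>t. \<Sum>k=1..n. c k * indicator {0..<\<alpha> k} t)
        (\<Sum>k=1..n. c k * \<alpha> k)"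
      using heights_nonneg by (rule has_bochner_integral_step)
  qed (use empty nonneg in auto)
  then show ?thesis using q_measure_layer_sum[OF q assms(2) Ain disj] unfolding c_def by simp
qed

end
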